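(* Suppose that $\mathcal{H}$ is a flat group of automorphisms of a totally disconnected, locally compact group $G$. Then $\mathcal{H}=\mathcal{H}_{FC_d}$, i.e. every element of $\mathcal{H}$ has bounded conjugacy class $\varphi^{\mathcal{H}}$.
   Context: Automorphisms are continuous with continuous inverse. $\mathcal{B}(G)$ is the set of compact, open subgroups of $G$ with metric $d(V,W)=\log\bigl(|V:V\cap W|\cdot|W:W\cap V|\bigr)$. A set $B$ of automorphisms is bounded if $B.V=\{\beta(V):\beta\in B\}$ has bounded diameter for some (equivalently every) $V\in\mathcal{B}(G)$. $\varphi^{\mathcal{H}}=\{\psi\varphi\psi^{-1}:\psi\in\mathcal{H}\}$ and $\mathcal{H}_{FC_d}=\{\varphi\in\mathcal{H}:\varphi^{\mathcal{H}}\text{ bounded}\}$. The scale of $\varphi$ is $s_G(\varphi)=\min\{|\varphi(V):\varphi(V)\cap V|:V\in\mathcal{B}(G)\}$; $\mathcal{H}$ is flat if there is $O\in\mathcal{B}(G)$ with $|\varphi(O):\varphi(O)\cap O|=s_G(\varphi)$ for all $\varphi\in\mathcal{H}$. *)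

theory Defs
  imports "HOL-Analysis.Analysis" "HOL-Algebra.Bij" "HOL-Algebra.Coset"
begin

definition topological_group :: "('a, 'b) monoid_scheme \<Rightarrow> 'a topology \<Rightarrow> bool" where
  "topological_group G T \<longleftrightarrow> group G \<and> topspace T = carrier G \<and>
     continuous_map (prod_topology T T) T (\<lambda>(x, y). x \<otimes>\<^bsub>G\<^esub> y) \<and>
     continuous_map T T (\<lambda>x. inv\<^bsub>G\<^esub> x)"

definition tdlc_group :: "('a, 'b) monoid_scheme \<Rightarrow> 'a topology \<Rightarrow> bool" where
  "tdlc_group G T \<longleftrightarrow> topological_group G T \<and> locally_compact_space T \<and>
     (\<forall>x\<in>topspace T. connected_component_of_set T x = {x})"

definition top_auto :: "('a, 'b) monoid_scheme \<Rightarrow> 'a topology \<Rightarrow> ('a \<Rightarrow> 'a) set" where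
  "top_auto G T = {\<phi> \<in> auto G. homeomorphic_map T T \<phi>}"

definition cos :: "('a, 'b) monoid_scheme \<Rightarrow> 'a topology \<Rightarrow> 'a set set" where
  "cos G T = {V. subgroup V G \<and> compactin T V \<and> openin T V}"

definition rel_index :: "('a, 'b) monoid_scheme \<Rightarrow> 'a set \<Rightarrow> 'a set \<Rightarrow> nat" where
  "rel_index G V W = card (rcosets\<^bsub>G\<lparr>carrier := V\<rparr>\<^esub> (V \<inter> W))"

definition cos_dist :: "('a, 'b) monoid_scheme \<Rightarrow> 'a set \<Rightarrow> 'a set \<Rightarrow> real" where
  "cos_dist G V W = ln (real (rel_index G V W * rel_index G W V))"

definition bounded_auts :: "('a, 'b) monoid_scheme \<Rightarrow> 'a topology \<Rightarrow> ('a \<Rightarrow> 'a) set \<Rightarrow> bool" where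
  "bounded_auts G T B \<longleftrightarrow> (\<exists>V\<in>cos G T. \<exists>C::real.
     \<forall>X\<in>(\<lambda>\<beta>. \<beta> ` V) ` B. \<forall>Y\<in>(\<lambda>\<beta>. \<beta> ` V) ` B. cos_dist G X Y \<le> C)"

definition conj_class :: "('a, 'b) monoid_scheme \<Rightarrow> ('a \<Rightarrow> 'a) set \<Rightarrow> ('a \<Rightarrow> 'a) \<Rightarrow> ('a \<Rightarrow> 'a) set" where
  "conj_class G H \<phi> = {\<psi> \<otimes>\<^bsub>BijGroup (carrier G)\<^esub> \<phi> \<otimes>\<^bsub>BijGroup (carrier G)\<^esub>
       inv\<^bsub>BijGroup (carrier G)\<^esub> \<psi> | \<psi>. \<psi> \<in> H}"

definition FCd :: "('a, 'b) monoid_scheme \<Rightarrow> 'a topology \<Rightarrow> ('a \<Rightarrow> 'a) set \<Rightarrow> ('a \<Rightarrow> 'a) set" where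
  "FCd G T H = {\<phi> \<in> H. bounded_auts G T (conj_class G H \<phi>)}"

definition scale :: "('a, 'b) monoid_scheme \<Rightarrow> 'a topology \<Rightarrow> ('a \<Rightarrow> 'a) \<Rightarrow> nat" where
  "scale G T \<phi> = (LEAST n. \<exists>V\<in>cos G T. n = rel_index G (\<phi> ` V) V)"

definition flat :: "('a, 'b) monoid_scheme \<Rightarrow> 'a topology \<Rightarrow> ('a \<Rightarrow> 'a) set \<Rightarrow> bool" where
  "flat G T H \<longleftrightarrow> (\<exists>U\<in>cos G T. \<forall>\<phi>\<in>H. rel_index G (\<phi> ` U) U = scale G T \<phi>)"

end

theory Submission
  imports Defs
begin

text \<open>Flatness provides one compact open subgroup \<open>U\<close> at which the scale of every element of
  \<open>H\<close> is attained. For \<open>\<psi> \<in> H\<close> the conjugate \<open>\<psi>\<phi>\<psi>\<^sup>-\<^sup>1\<close> moves \<open>\<psi>U\<close> exactly as \<open>\<phi>\<close> moves \<open>U\<close>,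
  so its scale, attained at \<open>U\<close>, is at most \<open>|\<phi>U : \<phi>U \<inter> U|\<close>. Doing the same for \<open>\<phi>\<^sup>-\<^sup>1\<close>
  bounds the indices between \<open>U\<close> and \<open>\<beta>U\<close> in both directions, uniformly in \<open>\<beta>\<close> conjugate to
  \<open>\<phi>\<close>, and the submultiplicativity \<open>|A : A \<inter> C| \<le> |A : A \<inter> B| |B : B \<inter> C|\<close> of indices then
  bounds \<open>d(\<beta>U, \<beta>'U)\<close>.\<close>

lemma rel_index_eq_card_rcosets:
  "rel_index G V W = card ((\<lambda>a. (V \<inter> W) #>\<^bsub>G\<^esub> a) ` V)"
  unfolding rel_index_def RCOSETS_def by (auto intro!: arg_cong[where f=card])

lemma (in group) rcoset_Int_eq_of_factors:
  assumes A: "subgroup A G" and B: "subgroup B G" and C: "subgroup C G"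
    and a: "a \<in> A" and h: "h \<in> A \<inter> B" and k: "k \<in> (B \<inter> C) #> inv h" "k \<in> A"
  shows "(A \<inter> C) #> (k \<otimes> (h \<otimes> a)) = (A \<inter> C) #> a"
proof -
  obtain c where c: "c \<in> B \<inter> C" "k = c \<otimes> inv h"
    using k unfolding r_coset_def by blast
  have G: "a \<in> carrier G" "h \<in> carrier G" "c \<in> carrier G"
    using a h c A B subgroup.subset by blast+
  have "k \<otimes> h \<in> A" using subgroup.m_closed[OF A k(2)] h by blast
  moreover have "c = k \<otimes> h" using c G by (simp add: m_assoc)
  ultimately have "c \<in> A \<inter> C" using c(1) by simp
  have AC: "subgroup (A \<inter> C) G" using A C by (rule subgroups_Inter_pair)
  have "k \<otimes> (h \<otimes> a) = c \<otimes> a" using c(2) G by (simp add: m_assoc inv_solve_left')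
  hence "(A \<inter> C) #> (k \<otimes> (h \<otimes> a)) = ((A \<inter> C) #> c) #> a"
    using AC G by (simp add: coset_mult_assoc subgroup.subset)
  also have "\<dots> = (A \<inter> C) #> a" using coset_join2[OF G(3) AC \<open>c \<in> A \<inter> C\<close>] by simp
  finally show ?thesis .
qed

lemma (in group) rel_index_Int_le_mult:
  assumes A: "subgroup A G" and B: "subgroup B G" and C: "subgroup C G"
    and AB: "0 < rel_index G A B" and BC: "0 < rel_index G B C"
  shows "rel_index G A C \<le> rel_index G A B * rel_index G B C"
proof -
  let ?AB = "(\<lambda>a. (A \<inter> B) #> a) ` A" and ?BC = "(\<lambda>b. (B \<inter> C) #> b) ` B"
  have fin: "finite ?AB" "finite ?BC"
    using AB BC unfolding rel_index_eq_card_rcosets by (auto dest: card_ge_0_finite)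
  txt \<open>\<open>(A \<inter> C) a\<close> is recovered from the pair \<open>((A \<inter> B) a, (B \<inter> C) h\<^sup>-\<^sup>1)\<close>, where \<open>h a\<close> is
    the chosen representative of \<open>(A \<inter> B) a\<close>.\<close>
  define F where "F = (\<lambda>(X, Y). (A \<inter> C) #> ((SOME k. k \<in> Y \<inter> A) \<otimes> (SOME r. r \<in> X)))"
  have "(\<lambda>a. (A \<inter> C) #> a) ` A \<subseteq> F ` (?AB \<times> ?BC)"
  proof
    fix Z assume "Z \<in> (\<lambda>a. (A \<inter> C) #> a) ` A"
    then obtain a where a: "a \<in> A" "Z = (A \<inter> C) #> a" by blast
    define X where "X = (A \<inter> B) #> a"
    have "a \<in> X" unfolding X_def using a A B
      by (metis rcos_self subgroup.mem_carrier subgroups_Inter_pair)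
    hence "(SOME r. r \<in> X) \<in> X" by (rule someI)
    then obtain h where h: "h \<in> A \<inter> B" "(SOME r. r \<in> X) = h \<otimes> a"
      unfolding X_def r_coset_def by blast
    define Y where "Y = (B \<inter> C) #> inv h"
    have hinv: "inv h \<in> A \<inter> B" using h A B by (auto intro: subgroup.m_inv_closed)
    have "inv h \<in> carrier G" using hinv subgroup.mem_carrier[OF B] by simp
    hence "inv h \<in> Y" unfolding Y_def by (rule rcos_self[OF _ subgroups_Inter_pair[OF B C]])
    hence "inv h \<in> Y \<inter> A" using hinv by blast
    define k where "k = (SOME k. k \<in> Y \<inter> A)"
    have "k \<in> Y \<inter> A" unfolding k_def using \<open>inv h \<in> Y \<inter> A\<close> by (rule someI)
    have "F (X, Y) = (A \<inter> C) #> (k \<otimes> (h \<otimes> a))" by (simp add: F_def k_def h(2))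
    also have "\<dots> = Z"
      using rcoset_Int_eq_of_factors[OF A B C a(1) h(1)] \<open>k \<in> Y \<inter> A\<close> a(2)
      unfolding Y_def by blast
    finally have "F (X, Y) = Z" .
    moreover have "(X, Y) \<in> ?AB \<times> ?BC" unfolding X_def Y_def using a hinv by auto
    ultimately show "Z \<in> F ` (?AB \<times> ?BC)" by blast
  qed
  hence "rel_index G A C \<le> card (F ` (?AB \<times> ?BC))"
    unfolding rel_index_eq_card_rcosets using fin by (intro card_mono) auto
  also have "\<dots> \<le> card (?AB \<times> ?BC)" using fin by (intro card_image_le) auto
  finally show ?thesis by (simp add: card_cartesian_product rel_index_eq_card_rcosets)
qed

lemma (in group) rel_index_hom_image:
  assumes f: "f \<in> hom G G'" and inj: "inj_on f (carrier G)"
    and A: "A \<subseteq> carrier G" and B: "B \<subseteq> carrier G"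
  shows "rel_index G' (f ` A) (f ` B) = rel_index G A B"
proof -
  have rcos_image: "(f ` K) #>\<^bsub>G'\<^esub> (f a) = f ` (K #> a)"
    if "K \<subseteq> carrier G" "a \<in> carrier G" for K a
    using that f unfolding r_coset_def by (auto simp: hom_mult[symmetric] subset_iff)
  have "(\<lambda>b. (f ` A \<inter> f ` B) #>\<^bsub>G'\<^esub> b) ` (f ` A) = (\<lambda>a. f ` (A \<inter> B) #>\<^bsub>G'\<^esub> f a) ` A"
    unfolding inj_on_image_Int[OF inj A B] by (rule image_image)
  also have "\<dots> = (\<lambda>a. f ` ((A \<inter> B) #> a)) ` A"
    by (rule image_cong[OF refl], rule rcos_image) (use A in auto)
  also have "\<dots> = image f ` ((\<lambda>a. (A \<inter> B) #> a) ` A)" by (rule image_image[symmetric])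
  finally have "(\<lambda>b. (f ` A \<inter> f ` B) #>\<^bsub>G'\<^esub> b) ` (f ` A) = image f ` ((\<lambda>a. (A \<inter> B) #> a) ` A)" .
  moreover have "inj_on (image f) ((\<lambda>a. (A \<inter> B) #> a) ` A)"
  proof (rule inj_on_subset[OF inj_on_image_Pow[OF inj]])
    have "(A \<inter> B) #> a \<subseteq> carrier G" if "a \<in> A" for a
      using A that by (intro r_coset_subset_G) auto
    thus "(\<lambda>a. (A \<inter> B) #> a) ` A \<subseteq> Pow (carrier G)" by blast
  qed
  ultimately show ?thesis unfolding rel_index_eq_card_rcosets by (simp add: card_image)
qed

lemma topological_group_imp_group: "topological_group G T \<Longrightarrow> group G"
  unfolding topological_group_def by blast

lemma continuous_map_mult_right:
  assumes "topological_group G T" "b \<in> carrier G"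
  shows "continuous_map T T (\<lambda>x. x \<otimes>\<^bsub>G\<^esub> b)"
proof -
  have "continuous_map T (prod_topology T T) (\<lambda>x. (x, b))"
    using assms unfolding topological_group_def by (intro continuous_map_pairedI) auto
  moreover have "continuous_map (prod_topology T T) T (\<lambda>(x, y). x \<otimes>\<^bsub>G\<^esub> y)"
    using assms unfolding topological_group_def by blast
  ultimately show ?thesis using continuous_map_compose by (fastforce simp: o_def)
qed

lemma (in group) openin_rcoset:
  assumes tg: "topological_group G T" and K: "subgroup K G" "openin T K" and a: "a \<in> carrier G"
  shows "openin T (K #>\<^bsub>G\<^esub> a)"
proof -
  have top: "topspace T = carrier G" using tg unfolding topological_group_def by blast
  have "K #> a = {x \<in> topspace T. x \<otimes> inv a \<in> K}"
  proof safe
    fix x assume "x \<in> K #> a"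
    then obtain h where "h \<in> K" "x = h \<otimes> a" unfolding r_coset_def by blast
    moreover have "h \<in> carrier G" using \<open>h \<in> K\<close> subgroup.mem_carrier[OF K(1)] by blast
    ultimately show "x \<in> topspace T" "x \<otimes> inv a \<in> K" using a top by (auto simp: m_assoc)
  next
    fix x assume "x \<in> topspace T" "x \<otimes> inv a \<in> K"
    then show "x \<in> K #> a" unfolding r_coset_def using a top
      by (auto intro!: bexI[of _ "x \<otimes> inv a"] simp: m_assoc)
  qed
  also have "openin T \<dots>"
    using openin_continuous_map_preimage[OF continuous_map_mult_right[OF tg inv_closed[OF a]] K(2)] .
  finally show ?thesis .
qed

text \<open>The cosets of the open subgroup \<open>V \<inter> W\<close> form a disjoint open cover of the compact \<open>V\<close>.\<close>

lemma (in group) rel_index_cos_pos: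
  assumes tg: "topological_group G T" and V: "V \<in> cos G T" and W: "W \<in> cos G T"
  shows "0 < rel_index G V W"
proof -
  have sV: "subgroup V G" and K: "subgroup (V \<inter> W) G"
    using V W subgroups_Inter_pair unfolding cos_def by auto
  have oK: "openin T (V \<inter> W)" and cV: "compactin T V" using V W unfolding cos_def by auto
  let ?U = "(\<lambda>a. (V \<inter> W) #> a) ` V"
  have "\<forall>X\<in>?U. openin T X" using openin_rcoset[OF tg K oK] subgroup.mem_carrier[OF sV] by blast
  moreover have "V \<subseteq> \<Union> ?U" using rcos_self[OF _ K] subgroup.mem_carrier[OF sV] by blast
  ultimately have "\<exists>F. finite F \<and> F \<subseteq> ?U \<and> V \<subseteq> \<Union> F"
    using cV unfolding compactin_def by blast
  then obtain F where F: "finite F" "F \<subseteq> ?U" "V \<subseteq> \<Union> F" by blast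
  have "?U \<subseteq> F"
  proof
    fix X assume "X \<in> ?U"
    then obtain a where a: "a \<in> V" "X = (V \<inter> W) #> a" by blast
    obtain Y where Y: "Y \<in> F" "a \<in> Y" using F a by blast
    then obtain b where b: "b \<in> V" "Y = (V \<inter> W) #> b" using F by blast
    have "Y = X"
      using repr_independence[OF _ subgroup.mem_carrier[OF sV b(1)] K] Y(2) a b(2) by simp
    thus "X \<in> F" using Y(1) by simp
  qed
  hence "finite ?U" using F finite_subset by blast
  moreover have "?U \<noteq> {}" using subgroup.one_closed[OF sV] by blast
  ultimately show ?thesis unfolding rel_index_eq_card_rcosets by (simp add: card_gt_0_iff)
qed

lemma cos_dist_le_ln:
  assumes tg: "topological_group G T" and X: "X \<in> cos G T" and Y: "Y \<in> cos G T"
    and XY: "rel_index G X Y \<le> k" and YX: "rel_index G Y X \<le> k"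
  shows "cos_dist G X Y \<le> ln (real (k * k))"
proof -
  have "0 < rel_index G X Y * rel_index G Y X"
    using group.rel_index_cos_pos[OF topological_group_imp_group[OF tg] tg] X Y by simp
  moreover have "rel_index G X Y * rel_index G Y X \<le> k * k" using XY YX by (rule mult_le_mono)
  ultimately show ?thesis unfolding cos_dist_def by (intro ln_mono) (simp_all only: of_nat_le_iff of_nat_0_less_iff)
qed

lemma bounded_autsI:
  assumes tg: "topological_group G T" and V: "V \<in> cos G T"
    and B: "\<And>\<beta>. \<beta> \<in> B \<Longrightarrow> \<beta> ` V \<in> cos G T \<and> rel_index G (\<beta> ` V) V \<le> m \<and> rel_index G V (\<beta> ` V) \<le> n"
  shows "bounded_auts G T B"
proof -
  interpret group G using tg by (rule topological_group_imp_group)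
  have sub: "subgroup X G" if "X \<in> cos G T" for X using that unfolding cos_def by blast
  have le: "rel_index G (\<beta> ` V) (\<gamma> ` V) \<le> m * n" if "\<beta> \<in> B" "\<gamma> \<in> B" for \<beta> \<gamma>
  proof -
    have "rel_index G (\<beta> ` V) (\<gamma> ` V) \<le> rel_index G (\<beta> ` V) V * rel_index G V (\<gamma> ` V)"
      using B[OF that(1)] B[OF that(2)] V
      by (intro rel_index_Int_le_mult sub rel_index_cos_pos[OF tg]) auto
    also have "\<dots> \<le> m * n" using B[OF that(1)] B[OF that(2)] by (intro mult_le_mono) auto
    finally show ?thesis .
  qed
  show ?thesis unfolding bounded_auts_def
  proof (intro bexI[OF _ V] exI[of _ "ln (real ((m * n) * (m * n)))"] ballI)
    fix X Y assume "X \<in> (\<lambda>\<beta>. \<beta> ` V) ` B" "Y \<in> (\<lambda>\<beta>. \<beta> ` V) ` B"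
    then obtain \<beta> \<gamma> where \<beta>: "\<beta> \<in> B" "X = \<beta> ` V" and \<gamma>: "\<gamma> \<in> B" "Y = \<gamma> ` V" by blast
    show "cos_dist G X Y \<le> ln (real ((m * n) * (m * n)))"
      unfolding \<beta>(2) \<gamma>(2) using B[OF \<beta>(1)] B[OF \<gamma>(1)] le[OF \<beta>(1) \<gamma>(1)] le[OF \<gamma>(1) \<beta>(1)]
      by (intro cos_dist_le_ln[OF tg]) blast+
  qed
qed

lemma carrier_BijGroup: "carrier (BijGroup S) = Bij S"
  by (simp add: BijGroup_def)

lemma Bij_mult_image:
  assumes "f \<in> Bij S" "g \<in> Bij S" "X \<subseteq> S"
  shows "(f \<otimes>\<^bsub>BijGroup S\<^esub> g) ` X = f ` g ` X"
  using assms unfolding BijGroup_def by (force simp: compose_def)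

lemma Bij_image_inv_image:
  assumes f: "f \<in> Bij S" and X: "X \<subseteq> S"
  shows "f ` (inv\<^bsub>BijGroup S\<^esub> f) ` X = X"
proof -
  interpret B: group "BijGroup S" by (rule group_BijGroup)
  have inv_f: "inv\<^bsub>BijGroup S\<^esub> f \<in> Bij S" using B.inv_closed f by (simp add: carrier_BijGroup)
  have "f ` (inv\<^bsub>BijGroup S\<^esub> f) ` X = (f \<otimes>\<^bsub>BijGroup S\<^esub> inv\<^bsub>BijGroup S\<^esub> f) ` X"
    using Bij_mult_image[OF f inv_f X] by simp
  also have "\<dots> = \<one>\<^bsub>BijGroup S\<^esub> ` X" using B.r_inv f by (simp add: carrier_BijGroup)
  also have "\<dots> = X" using X by (auto simp: BijGroup_def)
  finally show ?thesis .
qed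

lemma top_auto_imp_auto: "f \<in> top_auto G T \<Longrightarrow> f \<in> auto G"
  unfolding top_auto_def by blast

lemma auto_imp_hom: "f \<in> auto G \<Longrightarrow> f \<in> hom G G"
  unfolding auto_def by blast

lemma auto_imp_Bij: "f \<in> auto G \<Longrightarrow> f \<in> Bij (carrier G)"
  unfolding auto_def by blast

lemma auto_inj_on: "f \<in> auto G \<Longrightarrow> inj_on f (carrier G)"
  unfolding auto_def Bij_def bij_betw_def by blast

lemma cos_subset_carrier: "V \<in> cos G T \<Longrightarrow> V \<subseteq> carrier G"
  unfolding cos_def by (auto dest: subgroup.subset)

lemma top_auto_image_cos:
  assumes G: "group G" and f: "f \<in> top_auto G T" and V: "V \<in> cos G T"
  shows "f ` V \<in> cos G T"
proof -
  have hom: "f \<in> hom G G" and homeo: "homeomorphic_map T T f"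
    using f unfolding top_auto_def auto_def by auto
  have "subgroup (f ` V) G"
    using group_hom.subgroup_img_is_subgroup[of G G f V] G hom V unfolding cos_def
    by (simp add: group_hom_def group_hom_axioms_def)
  moreover have "compactin T (f ` V)"
    using image_compactin[OF _ homeomorphic_imp_continuous_map[OF homeo]] V unfolding cos_def by auto
  moreover have "openin T (f ` V)"
    using homeomorphic_map_openness[OF homeo] V unfolding cos_def by (auto simp: openin_subset)
  ultimately show ?thesis unfolding cos_def by simp
qed

lemma (in group) rel_index_inv_image:
  assumes f: "f \<in> auto G" and V: "V \<subseteq> carrier G"
  shows "rel_index G V (f ` V) = rel_index G ((inv\<^bsub>BijGroup (carrier G)\<^esub> f) ` V) V"
proof -
  let ?g = "inv\<^bsub>BijGroup (carrier G)\<^esub> f"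
  have "?g \<in> Bij (carrier G)"
    using group.inv_closed[OF group_BijGroup] auto_imp_Bij[OF f] by (simp add: carrier_BijGroup)
  hence "?g ` V \<subseteq> carrier G" using V unfolding Bij_def bij_betw_def by blast
  hence "rel_index G (f ` ?g ` V) (f ` V) = rel_index G (?g ` V) V"
    by (rule rel_index_hom_image[OF auto_imp_hom[OF f] auto_inj_on[OF f] _ V])
  thus ?thesis using Bij_image_inv_image[OF auto_imp_Bij[OF f] V] by simp
qed

lemma scale_le_rel_index: "V \<in> cos G T \<Longrightarrow> scale G T \<phi> \<le> rel_index G (\<phi> ` V) V"
  unfolding scale_def by (rule Least_le) blast

lemma scale_conj_le:
  assumes G: "group G" and \<psi>: "\<psi> \<in> top_auto G T" and \<phi>: "\<phi> \<in> Bij (carrier G)" and V: "V \<in> cos G T"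
  shows "scale G T (\<psi> \<otimes>\<^bsub>BijGroup (carrier G)\<^esub> \<phi> \<otimes>\<^bsub>BijGroup (carrier G)\<^esub> inv\<^bsub>BijGroup (carrier G)\<^esub> \<psi>)
    \<le> rel_index G (\<phi> ` V) V"
proof -
  let ?B = "BijGroup (carrier G)"
  interpret B: group ?B by (rule group_BijGroup)
  define \<beta> where "\<beta> = \<psi> \<otimes>\<^bsub>?B\<^esub> \<phi> \<otimes>\<^bsub>?B\<^esub> inv\<^bsub>?B\<^esub> \<psi>"
  have \<psi>_aut: "\<psi> \<in> auto G" by (rule top_auto_imp_auto[OF \<psi>])
  have \<psi>B: "\<psi> \<in> carrier ?B" and \<phi>B: "\<phi> \<in> carrier ?B"
    using auto_imp_Bij[OF \<psi>_aut] \<phi> by (auto simp: carrier_BijGroup)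
  have \<beta>B: "\<beta> \<in> carrier ?B" unfolding \<beta>_def using \<psi>B \<phi>B by simp
  have VG: "V \<subseteq> carrier G" using V by (rule cos_subset_carrier)
  have "\<beta> ` \<psi> ` V = (\<beta> \<otimes>\<^bsub>?B\<^esub> \<psi>) ` V"
    using Bij_mult_image[of \<beta> "carrier G" \<psi> V] \<beta>B \<psi>B VG by (simp add: carrier_BijGroup)
  also have "\<beta> \<otimes>\<^bsub>?B\<^esub> \<psi> = \<psi> \<otimes>\<^bsub>?B\<^esub> \<phi>" unfolding \<beta>_def using \<psi>B \<phi>B by (simp add: B.m_assoc)
  also have "(\<psi> \<otimes>\<^bsub>?B\<^esub> \<phi>) ` V = \<psi> ` \<phi> ` V"
    using Bij_mult_image[of \<psi> "carrier G" \<phi> V] \<psi>B \<phi>B VG by (simp add: carrier_BijGroup)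
  finally have transport: "\<beta> ` \<psi> ` V = \<psi> ` \<phi> ` V" .
  have "\<phi> ` V \<subseteq> carrier G" using \<phi> VG unfolding Bij_def bij_betw_def by blast
  note index_eq = group.rel_index_hom_image[OF G auto_imp_hom[OF \<psi>_aut] auto_inj_on[OF \<psi>_aut] this VG]
  have "scale G T \<beta> \<le> rel_index G (\<beta> ` \<psi> ` V) (\<psi> ` V)"
    by (rule scale_le_rel_index[OF top_auto_image_cos[OF G \<psi> V]])
  also have "\<dots> = rel_index G (\<phi> ` V) V" unfolding transport by (rule index_eq)
  finally show ?thesis unfolding \<beta>_def .
qed

lemma conj_class_subset:
  assumes "subgroup H (BijGroup (carrier G))" "\<phi> \<in> H"
  shows "conj_class G H \<phi> \<subseteq> H"
  using assms unfolding conj_class_def by (auto intro: subgroup.m_closed subgroup.m_inv_closed)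

lemma inv_mem_conj_class:
  assumes H: "subgroup H (BijGroup (carrier G))" and \<phi>: "\<phi> \<in> H" and \<beta>: "\<beta> \<in> conj_class G H \<phi>"
  shows "inv\<^bsub>BijGroup (carrier G)\<^esub> \<beta> \<in> conj_class G H (inv\<^bsub>BijGroup (carrier G)\<^esub> \<phi>)"
proof -
  let ?B = "BijGroup (carrier G)"
  interpret B: group ?B by (rule group_BijGroup)
  obtain \<psi> where \<psi>: "\<psi> \<in> H" and \<beta>_eq: "\<beta> = \<psi> \<otimes>\<^bsub>?B\<^esub> \<phi> \<otimes>\<^bsub>?B\<^esub> inv\<^bsub>?B\<^esub> \<psi>"
    using \<beta> unfolding conj_class_def by blast
  have "\<psi> \<in> carrier ?B" "\<phi> \<in> carrier ?B" using \<psi> \<phi> subgroup.subset[OF H] by auto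
  hence "inv\<^bsub>?B\<^esub> \<beta> = \<psi> \<otimes>\<^bsub>?B\<^esub> inv\<^bsub>?B\<^esub> \<phi> \<otimes>\<^bsub>?B\<^esub> inv\<^bsub>?B\<^esub> \<psi>"
    unfolding \<beta>_eq by (simp add: B.inv_mult_group B.m_assoc)
  thus ?thesis using \<psi> unfolding conj_class_def by blast
qed

lemma flat_conj_class_rel_index_le:
  assumes G: "group G" and H: "subgroup H (BijGroup (carrier G))" "H \<subseteq> top_auto G T"
    and U: "U \<in> cos G T" and tidy: "\<forall>\<phi>\<in>H. rel_index G (\<phi> ` U) U = scale G T \<phi>"
    and \<phi>: "\<phi> \<in> H" and \<beta>: "\<beta> \<in> conj_class G H \<phi>"
  shows "rel_index G (\<beta> ` U) U \<le> rel_index G (\<phi> ` U) U"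
proof -
  obtain \<psi> where \<psi>: "\<psi> \<in> H"
    and \<beta>_eq: "\<beta> = \<psi> \<otimes>\<^bsub>BijGroup (carrier G)\<^esub> \<phi> \<otimes>\<^bsub>BijGroup (carrier G)\<^esub> inv\<^bsub>BijGroup (carrier G)\<^esub> \<psi>"
    using \<beta> unfolding conj_class_def by blast
  have "rel_index G (\<beta> ` U) U = scale G T \<beta>"
    using tidy conj_class_subset[OF H(1) \<phi>] \<beta> by blast
  also have "\<dots> \<le> rel_index G (\<phi> ` U) U"
    unfolding \<beta>_eq using \<psi> \<phi> H(2) U
    by (intro scale_conj_le[OF G]) (auto dest: top_auto_imp_auto auto_imp_Bij)
  finally show ?thesis .
qed

theorem proposition2:
  fixes G :: "('a, 'b) monoid_scheme" and T :: "'a topology" and H :: "('a \<Rightarrow> 'a) set"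
  assumes "tdlc_group G T"
    and "subgroup H (BijGroup (carrier G))"
    and "H \<subseteq> top_auto G T"
    and "flat G T H"
  shows "H = FCd G T H"
proof -
  let ?B = "BijGroup (carrier G)"
  have tg: "topological_group G T" using assms(1) unfolding tdlc_group_def by blast
  interpret G: group G using tg by (rule topological_group_imp_group)
  obtain U where U: "U \<in> cos G T" and tidy: "\<forall>\<phi>\<in>H. rel_index G (\<phi> ` U) U = scale G T \<phi>"
    using assms(4) unfolding flat_def by blast
  have UG: "U \<subseteq> carrier G" using U by (rule cos_subset_carrier)
  have "bounded_auts G T (conj_class G H \<phi>)" if \<phi>: "\<phi> \<in> H" for \<phi>
  proof (rule bounded_autsI[OF tg U])
    fix \<beta> assume \<beta>: "\<beta> \<in> conj_class G H \<phi>"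
    have \<beta>_aut: "\<beta> \<in> top_auto G T" using conj_class_subset[OF assms(2) \<phi>] \<beta> assms(3) by blast
    have "rel_index G U (\<beta> ` U) = rel_index G ((inv\<^bsub>?B\<^esub> \<beta>) ` U) U"
      by (rule G.rel_index_inv_image[OF top_auto_imp_auto[OF \<beta>_aut] UG])
    also have "\<dots> \<le> rel_index G ((inv\<^bsub>?B\<^esub> \<phi>) ` U) U"
      using subgroup.m_inv_closed[OF assms(2) \<phi>] inv_mem_conj_class[OF assms(2) \<phi> \<beta>]
      by (intro flat_conj_class_rel_index_le[OF G.is_group assms(2,3) U tidy])
    finally show "\<beta> ` U \<in> cos G T \<and> rel_index G (\<beta> ` U) U \<le> rel_index G (\<phi> ` U) U
        \<and> rel_index G U (\<beta> ` U) \<le> rel_index G ((inv\<^bsub>?B\<^esub> \<phi>) ` U) U"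
      using top_auto_image_cos[OF G.is_group \<beta>_aut U]
        flat_conj_class_rel_index_le[OF G.is_group assms(2,3) U tidy \<phi> \<beta>] by blast
  qed
  thus ?thesis unfolding FCd_def by blast
qed

end
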